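(* For all terms $t,t'$ and every environment $\gamma$: if $t\,\llbracket\forall X.X\to X\rrbracket_\gamma\,t'$, then $t\,\llbracket\forall X.X\to X\rrbracket_\gamma\,I$, where $I=\lambda x.x$.
   Context: Terms are those of the pure untyped $\lambda$-calculus, up to $\alpha$-equivalence; $=_{\beta\eta}$ is $\beta\eta$-convertibility. A relation on terms is $\beta\eta$-closed if closed under replacing either related term by a $\beta\eta$-equal one; $\mathcal{R}$ is the set of such relations; environments $\gamma$ map finitely many type variables to $\mathcal{R}$. Interpretation of types: $\llbracket X\rrbracket_\gamma=\gamma(X)$; $t\,\llbracket R\to R'\rrbracket_\gamma\,t'$ iff for all $a,a'$ with $a\,\llbracket R\rrbracket_\gamma\,a'$, $t\,a\,\llbracket R'\rrbracket_\gamma\,t'\,a'$; $\llbracket \forall X.R\rrbracket_\gamma=\bigcap_{r\in\mathcal{R}}\llbracket R\rrbracket_{\gamma[X\mapsto r]}$. *)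

theory Defs
  imports Main
begin

datatype dB = Var nat | App dB dB | Abs dB

primrec lift :: "dB \<Rightarrow> nat \<Rightarrow> dB" where
  "lift (Var i) k = (if i < k then Var i else Var (Suc i))"
| "lift (App s t) k = App (lift s k) (lift t k)"
| "lift (Abs s) k = Abs (lift s (Suc k))"

primrec subst :: "dB \<Rightarrow> dB \<Rightarrow> nat \<Rightarrow> dB" where
  "subst (Var i) s k = (if k < i then Var (i - 1) else if i = k then s else Var i)"
| "subst (App t u) s k = App (subst t s k) (subst u s k)"
| "subst (Abs t) s k = Abs (subst t (lift s 0) (Suc k))"

inductive beta_eta :: "dB \<Rightarrow> dB \<Rightarrow> bool" where
  beta: "beta_eta (App (Abs s) t) (subst s t 0)"
| eta: "beta_eta (Abs (App (lift t 0) (Var 0))) t"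
| appL: "beta_eta s t \<Longrightarrow> beta_eta (App s u) (App t u)"
| appR: "beta_eta s t \<Longrightarrow> beta_eta (App u s) (App u t)"
| abs: "beta_eta s t \<Longrightarrow> beta_eta (Abs s) (Abs t)"

definition conv :: "dB \<Rightarrow> dB \<Rightarrow> bool" where
  "conv = equivclp beta_eta"

type_synonym rel = "dB \<Rightarrow> dB \<Rightarrow> bool"

definition be_closed :: "rel \<Rightarrow> bool" where
  "be_closed r \<longleftrightarrow> (\<forall>t t' u u'. r t t' \<and> conv t u \<and> conv t' u' \<longrightarrow> r u u')"

datatype ty = TVar nat | Arr ty ty | All nat ty

type_synonym env = "nat \<rightharpoonup> rel"

definition is_env :: "env \<Rightarrow> bool" where
  "is_env \<gamma> \<longleftrightarrow> finite (dom \<gamma>) \<and> (\<forall>r \<in> ran \<gamma>. be_closed r)"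

text \<open>Unbound type variables are interpreted as the empty relation (irrelevant for closed types).\<close>
primrec interp :: "env \<Rightarrow> ty \<Rightarrow> rel" where
  "interp \<gamma> (TVar X) = (case \<gamma> X of Some r \<Rightarrow> r | None \<Rightarrow> (\<lambda>_ _. False))"
| "interp \<gamma> (Arr A B) = (\<lambda>t t'. \<forall>a a'. interp \<gamma> A a a' \<longrightarrow> interp \<gamma> B (App t a) (App t' a'))"
| "interp \<gamma> (All X A) = (\<lambda>t t'. \<forall>r. be_closed r \<longrightarrow> interp (\<gamma>(X \<mapsto> r)) A t t')"

definition Id_tm :: dB where
  "Id_tm = Abs (Var 0)"

end

theory Submission
  imports Defs
begin

text \<open>Given a \<open>\<beta>\<eta>\<close>-closed \<open>r\<close> and \<open>r a a'\<close>, instantiate \<open>X\<close> with the \<open>\<beta>\<eta>\<close>-closed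
  relation \<open>{(u, u'). r u a' \<and> u' =\<^sub>\<beta>\<^sub>\<eta> a'}\<close>, which relates \<open>a\<close> to \<open>a'\<close>. Parametricity of \<open>t\<close>
  then gives \<open>r (t a) a'\<close>, and \<open>a' =\<^sub>\<beta>\<^sub>\<eta> I a'\<close> yields \<open>r (t a) (I a')\<close>.\<close>

lemma equivp_conv: "equivp conv"
  unfolding conv_def equivp_reflp_symp_transp
  by (simp add: reflpI sympI transpI equivclp_sym equivclp_trans)

lemma conv_App_Id_tm: "conv a (App Id_tm a)"
proof -
  have "beta_eta (App (Abs (Var 0)) a) (subst (Var 0) a 0)"
    by (rule beta_eta.beta)
  then have "equivclp beta_eta (App Id_tm a) a"
    unfolding Id_tm_def by (simp add: r_into_equivclp)
  then show ?thesis
    unfolding conv_def by (rule equivclp_sym)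
qed

lemma be_closed_conv_right:
  assumes "be_closed r" and "r u v" and "conv v w"
  shows "r u w"
  using assms equivp_reflp[OF equivp_conv] unfolding be_closed_def by blast

lemma be_closed_right_section:
  assumes "be_closed r"
  shows "be_closed (\<lambda>u u'. r u a' \<and> conv u' a')"
  unfolding be_closed_def
proof (intro allI impI)
  fix u u' v v'
  assume "(r u a' \<and> conv u' a') \<and> conv u v \<and> conv u' v'"
  moreover note equivp_conv[THEN equivp_symp] equivp_conv[THEN equivp_transp]
    equivp_conv[THEN equivp_reflp]
  ultimately show "r v a' \<and> conv v' a'"
    using assms unfolding be_closed_def by meson
qed

lemma interp_All_Arr_TVar_TVar:
  "interp \<gamma> (All X (Arr (TVar X) (TVar X))) t t' \<longleftrightarrow>
     (\<forall>r. be_closed r \<longrightarrow> (\<forall>a a'. r a a' \<longrightarrow> r (App t a) (App t' a')))"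
  by simp

lemma poly_id_App_related:
  assumes "interp \<gamma> (All X (Arr (TVar X) (TVar X))) t t'"
    and "be_closed r" and "r a a'"
  shows "r (App t a) a'"
proof -
  let ?s = "\<lambda>u u'. r u a' \<and> conv u' a'"
  have "?s a a'"
    using \<open>r a a'\<close> equivp_reflp[OF equivp_conv] by simp
  with assms(1) be_closed_right_section[OF \<open>be_closed r\<close>]
  have "?s (App t a) (App t' a')"
    unfolding interp_All_Arr_TVar_TVar by blast
  then show ?thesis by simp
qed

theorem mainTheorem14:
  fixes t t' :: dB and \<gamma> :: env and X :: nat
  assumes "is_env \<gamma>"
    and "interp \<gamma> (All X (Arr (TVar X) (TVar X))) t t'"
  shows "interp \<gamma> (All X (Arr (TVar X) (TVar X))) t Id_tm"
  unfolding interp_All_Arr_TVar_TVar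
proof (intro allI impI)
  fix r a a'
  assume "be_closed r" and "r a a'"
  with assms(2) have "r (App t a) a'"
    by (rule poly_id_App_related)
  with \<open>be_closed r\<close> show "r (App t a) (App Id_tm a')"
    using conv_App_Id_tm by (rule be_closed_conv_right)
qed

end
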